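(* In the two-shock setting ($v_\pm>0$, $u_->u_+$, intermediate state $(u_*^{\epsilon_1\epsilon_2},v_*^{\epsilon_1\epsilon_2})$, shock speeds $\sigma_1^{\epsilon_1\epsilon_2},\sigma_2^{\epsilon_1\epsilon_2}$), $$\lim_{\epsilon_1,\epsilon_2\to0}\int_{\sigma_1^{\epsilon_1\epsilon_2}}^{\sigma_2^{\epsilon_1\epsilon_2}}v_*^{\epsilon_1\epsilon_2}\,d\xi=\sigma(v_+-v_-)-(u_+v_+-u_-v_-)=\tfrac12(v_-+v_+)(u_--u_+),\qquad \sigma=\tfrac12(u_-+u_+).$$
   Context: Perturbed Brio system: $u_t+(\tfrac12u^2+\tfrac12\epsilon_1v^2)_x=0$, $v_t+(uv-\epsilon_2v)_x=0$, $\epsilon_1,\epsilon_2>0$, $v>0$, with Riemann data $(u_-,v_-)$ for $x<0$, $(u_+,v_+)$ for $x>0$. A two-shock Riemann solution is one with an intermediate state $(u_*,v_* )$, $v_*>\max(v_-,v_+)$, $u_+<u_*<u_-$, such that $$u_*=u_-+(v_*-v_-)\frac{\epsilon_2-\sqrt{\epsilon_2^2+4\epsilon_1(v_*+v_-)^2}}{v_*+v_-},\qquad u_+=u_*+(v_+-v_* )\frac{\epsilon_2+\sqrt{\epsilon_2^2+4\epsilon_1(v_*+v_+)^2}}{v_*+v_+},$$ with shock speeds $\sigma_1=u_-+\frac{v_*(u_*-u_-)}{v_*-v_-}-\epsilon_2$ and $\sigma_2=u_++\frac{v_*(u_+-u_* )}{v_+-v_*}-\epsilon_2$. The limit is taken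 over parameters for which this solution exists. *)

theory Defs
  imports "HOL-Analysis.Analysis"
begin

text \<open>Two-shock Riemann solution of the perturbed Brio system with parameters e1, e2:
  intermediate state (us, vs) joining (um, vm) (left) and (up, vp) (right).\<close>
definition two_shock :: "real \<Rightarrow> real \<Rightarrow> real \<Rightarrow> real \<Rightarrow> real \<Rightarrow> real \<Rightarrow> real \<Rightarrow> real \<Rightarrow> bool" where
  "two_shock e1 e2 um vm up vp us vs \<longleftrightarrow>
     vs > max vm vp \<and> up < us \<and> us < um \<and>
     us = um + (vs - vm) * (e2 - sqrt (e2^2 + 4 * e1 * (vs + vm)^2)) / (vs + vm) \<and>
     up = us + (vp - vs) * (e2 + sqrt (e2^2 + 4 * e1 * (vs + vp)^2)) / (vs + vp)"

definition sigma1 :: "real \<Rightarrow> real \<Rightarrow> real \<Rightarrow> real \<Rightarrow> real \<Rightarrow> real" where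
  "sigma1 e2 um vm us vs = um + vs * (us - um) / (vs - vm) - e2"

definition sigma2 :: "real \<Rightarrow> real \<Rightarrow> real \<Rightarrow> real \<Rightarrow> real \<Rightarrow> real" where
  "sigma2 e2 up vp us vs = up + vs * (up - us) / (vp - vs) - e2"

end

theory Submission
  imports Defs
begin

text \<open>Write \<open>s\<^sub>1 = (u\<^sub>- - u\<^sub>*)/(v\<^sub>* - v\<^sub>-)\<close> and \<open>s\<^sub>2 = (u\<^sub>+ - u\<^sub>*)/(v\<^sub>+ - v\<^sub>*)\<close> for the
  slopes of the two shock curves. Then \<open>\<sigma>\<^sub>2 - \<sigma>\<^sub>1 = v\<^sub>+ s\<^sub>2 + v\<^sub>- s\<^sub>1\<close> and
  \<open>u\<^sub>- - u\<^sub>+ = (v\<^sub>* - v\<^sub>+) s\<^sub>2 + (v\<^sub>* - v\<^sub>-) s\<^sub>1\<close>, so the error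
  \<open>v\<^sub>*(\<sigma>\<^sub>2 - \<sigma>\<^sub>1) - (v\<^sub>- + v\<^sub>+)(u\<^sub>- - u\<^sub>+)/2\<close> is a combination of \<open>v\<^sub>* (s\<^sub>2 - s\<^sub>1)\<close> and
  \<open>v\<^sub>+ s\<^sub>2 + v\<^sub>- s\<^sub>1\<close>. Both are small although \<open>v\<^sub>*\<close> blows up: each \<open>s\<^sub>i\<close> is
  \<open>2\<surd>\<epsilon>\<^sub>1 + O(\<epsilon>\<^sub>2/v\<^sub>*)\<close>, and the \<open>\<surd>\<epsilon>\<^sub>1\<close> parts cancel in the difference up to \<open>O(\<epsilon>\<^sub>2/v\<^sub>*)\<close>.
  Hence the error is \<open>O(\<epsilon>\<^sub>2 + \<surd>\<epsilon>\<^sub>1)\<close>.\<close>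

lemma abs_sqrt_add_diff_le:
  fixes p q c :: real
  assumes "p \<ge> 0" "q \<ge> 0" "c \<ge> 0"
  shows "\<bar>sqrt (p + c) - sqrt (q + c)\<bar> \<le> \<bar>sqrt p - sqrt q\<bar>"
proof (cases "p = q")
  case False
  have rationalise: "sqrt x - sqrt y = (x - y) / (sqrt x + sqrt y)"
    if "x \<ge> 0" "y \<ge> 0" "x \<noteq> y" for x y :: real
  proof -
    have "sqrt x + sqrt y > 0"
      using that by (cases "x > 0") (auto intro: add_pos_nonneg add_nonneg_pos)
    moreover have "(sqrt x - sqrt y) * (sqrt x + sqrt y) = x - y"
      using that by (simp add: algebra_simps)
    ultimately show ?thesis by (simp add: field_simps)
  qed
  have pos: "sqrt p + sqrt q > 0"
    using assms False by (cases "p > 0") (auto intro: add_pos_nonneg add_nonneg_pos)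
  have "sqrt p + sqrt q \<le> sqrt (p + c) + sqrt (q + c)"
    using assms by (simp add: add_mono)
  then have "\<bar>p - q\<bar> / (sqrt (p + c) + sqrt (q + c)) \<le> \<bar>p - q\<bar> / (sqrt p + sqrt q)"
    using pos by (intro divide_left_mono) auto
  then show ?thesis
    using assms False pos by (simp add: rationalise)
qed simp

lemma sqrt_add_square_le:
  fixes e c d :: real
  assumes "e \<ge> 0" "c \<ge> 0" "d \<ge> 0"
  shows "sqrt (e\<^sup>2 + 4 * c * d\<^sup>2) \<le> e + 2 * sqrt c * d"
proof -
  have "sqrt (e\<^sup>2 + 4 * c * d\<^sup>2) \<le> sqrt (e\<^sup>2) + sqrt (4 * c * d\<^sup>2)"
    using assms by (intro sqrt_add_le_add_sqrt) auto
  also have "\<dots> = e + 2 * sqrt c * d"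
    using assms by (simp add: real_sqrt_mult)
  finally show ?thesis .
qed

lemma sqrt_add_square_divide:
  fixes e c d :: real
  assumes "d > 0"
  shows "sqrt (e\<^sup>2 + c * d\<^sup>2) / d = sqrt ((e / d)\<^sup>2 + c)"
proof -
  have "sqrt (e\<^sup>2 + c * d\<^sup>2) / d = sqrt ((e\<^sup>2 + c * d\<^sup>2) / d\<^sup>2)"
    using assms by (simp add: real_sqrt_divide)
  also have "(e\<^sup>2 + c * d\<^sup>2) / d\<^sup>2 = (e / d)\<^sup>2 + c"
    using assms by (simp add: field_simps)
  finally show ?thesis .
qed

lemma mult_abs_diff_divide_le:
  fixes v p m e :: real
  assumes "e \<ge> 0" "v \<ge> 0" "p \<ge> 0" "m \<ge> 0" "\<bar>m - p\<bar> \<le> v" "v + p > 0" "v + m > 0"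
  shows "v * \<bar>e / (v + p) - e / (v + m)\<bar> \<le> e"
proof -
  have "e / (v + p) - e / (v + m) = e * (m - p) / ((v + p) * (v + m))"
    using assms by (simp add: field_simps)
  then have "v * \<bar>e / (v + p) - e / (v + m)\<bar> = e * (v * \<bar>m - p\<bar>) / ((v + p) * (v + m))"
    using assms by (simp add: abs_mult)
  also have "\<dots> \<le> e * ((v + p) * (v + m)) / ((v + p) * (v + m))"
  proof -
    have "v * \<bar>m - p\<bar> \<le> v * v"
      using assms by (intro mult_left_mono) auto
    also have "\<dots> \<le> (v + p) * (v + m)"
      using assms by (intro mult_mono) auto
    finally show ?thesis
      using assms by (intro divide_right_mono mult_left_mono) auto
  qed
  also have "\<dots> = e"
    using assms by simp
  finally show ?thesis .
qed

lemma small_by_linear_sqrt_bound: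
  fixes A B :: real and f :: "real \<Rightarrow> real \<Rightarrow> 'a \<Rightarrow> 'b \<Rightarrow> real"
  assumes "A \<ge> 0" "B \<ge> 0"
    and bound: "\<And>e1 e2 y z. 0 < e1 \<Longrightarrow> 0 < e2 \<Longrightarrow> P e1 e2 y z \<Longrightarrow>
      \<bar>f e1 e2 y z\<bar> \<le> A * e2 + B * sqrt e1"
  shows "\<forall>\<epsilon>>0. \<exists>\<delta>>0. \<forall>e1 e2 y z.
    0 < e1 \<and> e1 < \<delta> \<and> 0 < e2 \<and> e2 < \<delta> \<and> P e1 e2 y z \<longrightarrow> \<bar>f e1 e2 y z\<bar> < \<epsilon>"
proof (intro allI impI)
  fix \<epsilon> :: real
  assume "\<epsilon> > 0"
  define t where "t = \<epsilon> / (A + B + 1)"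
  have t: "t > 0" "(A + B) * t < \<epsilon>"
    using assms(1,2) \<open>\<epsilon> > 0\<close> by (auto simp: t_def field_simps)
  have "\<bar>f e1 e2 y z\<bar> < \<epsilon>"
    if "0 < e1" "e1 < min t (t\<^sup>2)" "0 < e2" "e2 < min t (t\<^sup>2)" "P e1 e2 y z" for e1 e2 y z
  proof -
    have "e2 \<le> t" "sqrt e1 \<le> t"
      using that t by (auto intro: real_le_lsqrt)
    then have "A * e2 + B * sqrt e1 \<le> (A + B) * t"
      using assms(1,2) by (simp add: distrib_right add_mono mult_left_mono)
    then show ?thesis
      using bound[OF that(1,3,5)] t by linarith
  qed
  moreover have "min t (t\<^sup>2) > 0"
    using t by simp
  ultimately show "\<exists>\<delta>>0. \<forall>e1 e2 y z.
    0 < e1 \<and> e1 < \<delta> \<and> 0 < e2 \<and> e2 < \<delta> \<and> P e1 e2 y z \<longrightarrow> \<bar>f e1 e2 y z\<bar> < \<epsilon>"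
    by blast
qed

locale brio_two_shock =
  fixes e1 e2 um vm up vp us vs :: real
  assumes e1_nonneg: "e1 \<ge> 0" and e2_nonneg: "e2 \<ge> 0"
    and vm_pos: "vm > 0" and vp_pos: "vp > 0"
    and two_shock: "two_shock e1 e2 um vm up vp us vs"
begin

definition slope1 :: real where "slope1 = (um - us) / (vs - vm)"

definition slope2 :: real where "slope2 = (up - us) / (vp - vs)"

lemma shock_states:
  "vs > vm" "vs > vp" "up < us" "us < um"
  "us = um + (vs - vm) * (e2 - sqrt (e2\<^sup>2 + 4 * e1 * (vs + vm)\<^sup>2)) / (vs + vm)"
  "up = us + (vp - vs) * (e2 + sqrt (e2\<^sup>2 + 4 * e1 * (vs + vp)\<^sup>2)) / (vs + vp)"
  using two_shock by (auto simp: two_shock_def)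

lemma vs_pos: "vs > 0"
  using shock_states vm_pos by linarith

lemma slope_pos: "slope1 > 0" "slope2 > 0"
  using shock_states(1-4) by (simp_all add: slope1_def slope2_def divide_neg_neg)

lemma slope1_eq: "slope1 = (sqrt (e2\<^sup>2 + 4 * e1 * (vs + vm)\<^sup>2) - e2) / (vs + vm)"
proof -
  have "um - us = (vs - vm) * ((sqrt (e2\<^sup>2 + 4 * e1 * (vs + vm)\<^sup>2) - e2) / (vs + vm))"
    using vs_pos vm_pos by (subst shock_states(5)) (simp add: field_simps)
  then show ?thesis
    using shock_states(1) by (simp add: slope1_def)
qed

lemma slope2_eq: "slope2 = (e2 + sqrt (e2\<^sup>2 + 4 * e1 * (vs + vp)\<^sup>2)) / (vs + vp)"
proof -
  have "up - us = (vp - vs) * ((e2 + sqrt (e2\<^sup>2 + 4 * e1 * (vs + vp)\<^sup>2)) / (vs + vp))"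
    by (subst shock_states(6)) simp
  then show ?thesis
    using shock_states(2) by (simp add: slope2_def)
qed

lemma velocity_jump: "um - up = (vs - vp) * slope2 + (vs - vm) * slope1"
proof -
  have "(vs - vp) * slope2 = us - up" "(vs - vm) * slope1 = um - us"
    using shock_states(1,2) by (simp_all add: slope1_def slope2_def field_simps)
  then show ?thesis
    by linarith
qed

lemma speed_gap: "sigma2 e2 up vp us vs - sigma1 e2 um vm us vs = vp * slope2 + vm * slope1"
proof -
  have "sigma1 e2 um vm us vs = um - vs * slope1 - e2"
    using shock_states(1) by (simp add: sigma1_def slope1_def field_simps)
  moreover have "sigma2 e2 up vp us vs = up + vs * slope2 - e2"
    by (simp add: sigma2_def slope2_def)
  ultimately show ?thesis
    using velocity_jump by (simp add: algebra_simps)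
qed

lemma slope1_le: "vm * slope1 \<le> e2 + 2 * sqrt e1 * vm"
proof -
  have "slope1 \<le> (e2 + 2 * sqrt e1 * (vs + vm) - e2) / (vs + vm)"
    unfolding slope1_eq using vs_pos vm_pos e1_nonneg e2_nonneg
    by (intro divide_right_mono diff_right_mono sqrt_add_square_le) auto
  also have "\<dots> = 2 * sqrt e1"
    using vs_pos vm_pos by simp
  finally have "vm * slope1 \<le> vm * (2 * sqrt e1)"
    using vm_pos by (simp add: mult_left_mono)
  then show ?thesis
    using e2_nonneg by (simp add: algebra_simps)
qed

lemma slope2_le: "vp * slope2 \<le> 2 * e2 + 2 * sqrt e1 * vp"
proof -
  have "slope2 \<le> (e2 + (e2 + 2 * sqrt e1 * (vs + vp))) / (vs + vp)"
    unfolding slope2_eq using vs_pos vp_pos e1_nonneg e2_nonneg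
    by (intro divide_right_mono add_left_mono sqrt_add_square_le) auto
  also have "\<dots> = 2 * e2 / (vs + vp) + 2 * sqrt e1"
    using vs_pos vp_pos by (simp add: field_simps)
  finally have "vp * slope2 \<le> vp * (2 * e2 / (vs + vp) + 2 * sqrt e1)"
    using vp_pos by (simp add: mult_left_mono)
  also have "\<dots> = 2 * e2 * (vp / (vs + vp)) + 2 * sqrt e1 * vp"
    by (simp add: algebra_simps)
  also have "\<dots> \<le> 2 * e2 + 2 * sqrt e1 * vp"
    using vs_pos vp_pos e2_nonneg by (intro add_right_mono mult_left_le) auto
  finally show ?thesis .
qed

lemma slope_diff_le: "\<bar>vs * slope2 - vs * slope1\<bar> \<le> 3 * e2"
proof -
  let ?a = "sqrt (e2\<^sup>2 + 4 * e1 * (vs + vm)\<^sup>2) / (vs + vm)"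
  let ?b = "sqrt (e2\<^sup>2 + 4 * e1 * (vs + vp)\<^sup>2) / (vs + vp)"
  have split: "vs * slope2 - vs * slope1
      = e2 * (vs / (vs + vp)) + e2 * (vs / (vs + vm)) + vs * (?b - ?a)"
    using vs_pos vm_pos vp_pos
    by (simp add: slope1_eq slope2_eq add_divide_distrib diff_divide_distrib algebra_simps)
  have "\<bar>?b - ?a\<bar> \<le> \<bar>e2 / (vs + vp) - e2 / (vs + vm)\<bar>"
    using abs_sqrt_add_diff_le[of "(e2 / (vs + vp))\<^sup>2" "(e2 / (vs + vm))\<^sup>2" "4 * e1"]
      vs_pos vm_pos vp_pos e1_nonneg e2_nonneg
    by (simp add: sqrt_add_square_divide)
  then have "\<bar>vs * (?b - ?a)\<bar> \<le> vs * \<bar>e2 / (vs + vp) - e2 / (vs + vm)\<bar>"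
    using vs_pos by (simp add: abs_mult mult_left_mono)
  also have "\<dots> \<le> e2"
    using shock_states(1,2) vs_pos vm_pos vp_pos e2_nonneg
    by (intro mult_abs_diff_divide_le) auto
  finally have "\<bar>vs * (?b - ?a)\<bar> \<le> e2" .
  moreover have "0 \<le> e2 * (vs / (vs + vp))" "0 \<le> e2 * (vs / (vs + vm))"
    using vs_pos vm_pos vp_pos e2_nonneg by simp_all
  moreover have "e2 * (vs / (vs + vp)) \<le> e2" "e2 * (vs / (vs + vm)) \<le> e2"
    using vs_pos vm_pos vp_pos e2_nonneg by (auto simp: divide_le_eq intro!: mult_left_mono)
  ultimately show ?thesis
    unfolding split by (simp only: abs_le_iff) linarith
qed

lemma sigma1_le_sigma2: "sigma1 e2 um vm us vs \<le> sigma2 e2 up vp us vs"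
proof -
  have "0 < vp * slope2 + vm * slope1"
    using slope_pos vm_pos vp_pos by (intro add_pos_pos mult_pos_pos)
  then show ?thesis
    using speed_gap by linarith
qed

lemma integral_error_le:
  "\<bar>vs * (sigma2 e2 up vp us vs - sigma1 e2 um vm us vs) - (vm + vp) * (um - up) / 2\<bar>
     \<le> 3 * (vm + vp) * e2 + (vm + vp)\<^sup>2 * sqrt e1"
proof -
  define M where "M = vm + vp"
  define D where "D = vs * slope2 - vs * slope1"
  define S where "S = vp * slope2 + vm * slope1"
  have error_eq: "vs * (sigma2 e2 up vp us vs - sigma1 e2 um vm us vs) - M * (um - up) / 2
      = (vp - vm) * D / 2 + M * S / 2"
    unfolding speed_gap velocity_jump M_def D_def S_def by (simp add: field_simps)
  have "\<bar>(vp - vm) * D\<bar> \<le> M * (3 * e2)"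
    unfolding abs_mult M_def D_def using slope_diff_le vm_pos vp_pos
    by (intro mult_mono) auto
  moreover have "0 \<le> M * S"
    using slope_pos vm_pos vp_pos by (simp add: M_def S_def)
  moreover have "M * S \<le> M * (3 * e2 + 2 * sqrt e1 * M)"
    using slope1_le slope2_le vm_pos vp_pos
    by (intro mult_left_mono) (auto simp: M_def S_def algebra_simps)
  moreover have "3 * M * e2 + M\<^sup>2 * sqrt e1 = M * (3 * e2) / 2 + M * (3 * e2 + 2 * sqrt e1 * M) / 2"
    by (simp add: power2_eq_square field_simps)
  ultimately have "\<bar>(vp - vm) * D / 2 + M * S / 2\<bar> \<le> 3 * M * e2 + M\<^sup>2 * sqrt e1"
    by linarith
  then show ?thesis
    unfolding M_def error_eq[unfolded M_def] .
qed

end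

theorem lemma5p4:
  fixes um vm up vp :: real
  assumes "vm > 0" and "vp > 0" and "um > up"
  defines "\<sigma> \<equiv> (um + up) / 2"
  shows "(\<forall>\<epsilon>>0. \<exists>\<delta>>0. \<forall>e1 e2 us vs.
            0 < e1 \<and> e1 < \<delta> \<and> 0 < e2 \<and> e2 < \<delta> \<and> two_shock e1 e2 um vm up vp us vs \<longrightarrow>
            \<bar>integral {sigma1 e2 um vm us vs .. sigma2 e2 up vp us vs} (\<lambda>\<xi>. vs)
               - (\<sigma> * (vp - vm) - (up * vp - um * vm))\<bar> < \<epsilon>)
         \<and> \<sigma> * (vp - vm) - (up * vp - um * vm) = (vm + vp) * (um - up) / 2"
proof -
  have limit_eq: "\<sigma> * (vp - vm) - (up * vp - um * vm) = (vm + vp) * (um - up) / 2"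
    unfolding \<sigma>_def by (simp add: field_simps)
  have "\<bar>integral {sigma1 e2 um vm us vs .. sigma2 e2 up vp us vs} (\<lambda>\<xi>. vs)
          - (\<sigma> * (vp - vm) - (up * vp - um * vm))\<bar>
        \<le> 3 * (vm + vp) * e2 + (vm + vp)\<^sup>2 * sqrt e1"
    if "0 < e1" "0 < e2" "two_shock e1 e2 um vm up vp us vs" for e1 e2 us vs
  proof -
    interpret brio_two_shock e1 e2 um vm up vp us vs
      using that assms by unfold_locales auto
    show ?thesis
      using integral_error_le sigma1_le_sigma2
      by (simp add: limit_eq content_real mult.commute)
  qed
  then have "\<forall>\<epsilon>>0. \<exists>\<delta>>0. \<forall>e1 e2 us vs.
      0 < e1 \<and> e1 < \<delta> \<and> 0 < e2 \<and> e2 < \<delta> \<and> two_shock e1 e2 um vm up vp us vs \<longrightarrow>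
      \<bar>integral {sigma1 e2 um vm us vs .. sigma2 e2 up vp us vs} (\<lambda>\<xi>. vs)
         - (\<sigma> * (vp - vm) - (up * vp - um * vm))\<bar> < \<epsilon>"
    using assms(1,2)
    by (intro small_by_linear_sqrt_bound[of "3 * (vm + vp)" "(vm + vp)\<^sup>2"]) auto
  with limit_eq show ?thesis
    by blast
qed

end
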